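(* A $t$-$(v,k,\lambda)$ design has a zero-sum $2$-flow if and only if it is even.
   Context: A $t$-$(v,k,\lambda)$ design is a pair $(X,\mathcal{B})$ with $|X|=v$ and $\mathcal{B}$ a collection of $k$-subsets of $X$ such that every $t$-subset of $X$ lies in exactly $\lambda$ blocks; let $r$ be the number of blocks containing a given point. A design is $\alpha$-resolvable if $\mathcal{B}$ can be partitioned into classes ($\alpha$-parallel classes) such that each point of $X$ lies in exactly $\alpha$ blocks of each class; the number of classes is then $\rho=r/\alpha$. The design is even if it is $\alpha$-resolvable for some $\alpha$ with $\rho$ even. A zero-sum $2$-flow is a map $f:\mathcal{B}\to\{\pm1\}$ such that $\sum_{B\ni x} f(B)=0$ for every $x\in X$. *)

theory Defs
  imports "HOL-Library.Disjoint_Sets"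
begin

text \<open>A block collection is an indexed family B over a finite index set I
(so repeated blocks are allowed).  A t-(v,k,lambda) design on X.\<close>

definition t_design ::
  "nat \<Rightarrow> nat \<Rightarrow> nat \<Rightarrow> nat \<Rightarrow> 'a set \<Rightarrow> 'i set \<Rightarrow> ('i \<Rightarrow> 'a set) \<Rightarrow> bool" where
  "t_design t v k lam X I B \<longleftrightarrow>
     finite X \<and> card X = v \<and> finite I \<and> 1 \<le> t \<and> t \<le> k \<and> k \<le> v \<and>
     (\<forall>i\<in>I. B i \<subseteq> X \<and> card (B i) = k) \<and>
     (\<forall>T. T \<subseteq> X \<and> card T = t \<longrightarrow> card {i\<in>I. T \<subseteq> B i} = lam)"

definition alpha_resolution :: "nat \<Rightarrow> 'a set \<Rightarrow> 'i set \<Rightarrow> ('i \<Rightarrow> 'a set) \<Rightarrow> 'i set set \<Rightarrow> bool" where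
  "alpha_resolution \<alpha> X I B P \<longleftrightarrow>
     partition_on I P \<and> (\<forall>C\<in>P. \<forall>x\<in>X. card {i\<in>C. x \<in> B i} = \<alpha>)"

definition alpha_resolvable :: "nat \<Rightarrow> 'a set \<Rightarrow> 'i set \<Rightarrow> ('i \<Rightarrow> 'a set) \<Rightarrow> bool" where
  "alpha_resolvable \<alpha> X I B \<longleftrightarrow> (\<exists>P. alpha_resolution \<alpha> X I B P)"

text \<open>Even: alpha-resolvable for some alpha >= 1 with an even number rho of classes
(rho = r / alpha is the number of classes of the resolution).\<close>

definition even_design :: "'a set \<Rightarrow> 'i set \<Rightarrow> ('i \<Rightarrow> 'a set) \<Rightarrow> bool" where
  "even_design X I B \<longleftrightarrow>
     (\<exists>\<alpha> P. \<alpha> \<ge> 1 \<and> alpha_resolution \<alpha> X I B P \<and> even (card P))"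

definition zero_sum_2_flow :: "'a set \<Rightarrow> 'i set \<Rightarrow> ('i \<Rightarrow> 'a set) \<Rightarrow> ('i \<Rightarrow> int) \<Rightarrow> bool" where
  "zero_sum_2_flow X I B f \<longleftrightarrow>
     (\<forall>i\<in>I. f i = 1 \<or> f i = -1) \<and> (\<forall>x\<in>X. (\<Sum>i\<in>{i\<in>I. x \<in> B i}. f i) = 0)"

end

theory Submission
  imports Defs
begin

text \<open>Double counting the pairs (T, block) with T a t-subset through a point x shows that
every point of a t-design lies in the same number r of blocks. Given a zero-sum 2-flow, every
point lies in exactly r/2 blocks of sign +1 and r/2 of sign -1, so the two sign classes form an
(r/2)-resolution with two classes. Conversely, from an \<alpha>-resolution with an even number of
classes give half of the classes sign +1 and the rest sign -1: each point collects \<alpha> from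
every class, and these contributions cancel. This direction needs no design hypothesis.\<close>

lemma card_subsets_containing:
  assumes "finite A" "x \<in> A" "t \<ge> 1"
  shows "card {T. T \<subseteq> A \<and> card T = t \<and> x \<in> T} = (card A - 1) choose (t - 1)"
proof -
  have "bij_betw (\<lambda>T. T - {x}) {T. T \<subseteq> A \<and> card T = t \<and> x \<in> T}
          {S. S \<subseteq> A - {x} \<and> card S = t - 1}"
  proof (rule bij_betw_byWitness[where f' = "insert x"])
    show "(\<lambda>T. T - {x}) ` {T. T \<subseteq> A \<and> card T = t \<and> x \<in> T} \<subseteq> {S. S \<subseteq> A - {x} \<and> card S = t - 1}"
      using assms by (auto simp: card_Diff_singleton intro: finite_subset)
    show "insert x ` {S. S \<subseteq> A - {x} \<and> card S = t - 1} \<subseteq> {T. T \<subseteq> A \<and> card T = t \<and> x \<in> T}"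
      using assms by (auto simp: finite_subset card_insert_if)
  qed auto
  then have "card {T. T \<subseteq> A \<and> card T = t \<and> x \<in> T} = card {S. S \<subseteq> A - {x} \<and> card S = t - 1}"
    by (rule bij_betw_same_card)
  also have "\<dots> = (card A - 1) choose (t - 1)"
    using assms by (simp add: n_subsets)
  finally show ?thesis .
qed

lemma sum_card_filter_swap:
  assumes "finite A" "finite B"
  shows "(\<Sum>a\<in>A. card {b\<in>B. R a b}) = (\<Sum>b\<in>B. card {a\<in>A. R a b})"
proof -
  have "(\<Sum>a\<in>A. card {b\<in>B. R a b}) = (\<Sum>a\<in>A. \<Sum>b\<in>B. if R a b then 1 else 0)"
    using assms(2) by (simp add: sum.inter_filter[symmetric])
  also have "\<dots> = (\<Sum>b\<in>B. \<Sum>a\<in>A. if R a b then 1 else 0)"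
    by (rule sum.swap)
  also have "\<dots> = (\<Sum>b\<in>B. card {a\<in>A. R a b})"
    using assms(1) by (simp add: sum.inter_filter[symmetric])
  finally show ?thesis .
qed

lemma t_design_replication:
  assumes d: "t_design t v k lam X I B" and x: "x \<in> X"
  shows "card {i\<in>I. x \<in> B i} * ((k - 1) choose (t - 1)) = ((v - 1) choose (t - 1)) * lam"
proof -
  from d have fX: "finite X" and cX: "card X = v" and fI: "finite I" and t1: "1 \<le> t"
    and blocks: "\<And>i. i \<in> I \<Longrightarrow> B i \<subseteq> X \<and> card (B i) = k"
    and balanced: "\<And>T. T \<subseteq> X \<Longrightarrow> card T = t \<Longrightarrow> card {i\<in>I. T \<subseteq> B i} = lam"
    unfolding t_design_def by auto
  define S where "S = {T. T \<subseteq> X \<and> card T = t \<and> x \<in> T}"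
  have fS: "finite S"
    unfolding S_def using fX by simp
  have blocks_through_T: "card {i\<in>I. T \<subseteq> B i} = lam" if "T \<in> S" for T
    using that balanced unfolding S_def by auto
  have subsets_of_block: "card {T\<in>S. T \<subseteq> B i} = (if x \<in> B i then (k - 1) choose (t - 1) else 0)"
    if i: "i \<in> I" for i
  proof -
    have "{T\<in>S. T \<subseteq> B i} = {T. T \<subseteq> B i \<and> card T = t \<and> x \<in> T}"
      unfolding S_def using blocks[OF i] by auto
    moreover have "finite (B i)"
      using blocks[OF i] fX finite_subset by blast
    ultimately show ?thesis
      using card_subsets_containing[of "B i" x t] blocks[OF i] t1 by auto
  qed
  have "((v - 1) choose (t - 1)) * lam = (\<Sum>T\<in>S. card {i\<in>I. T \<subseteq> B i})"
    using card_subsets_containing[OF fX x t1] cX blocks_through_T by (simp add: S_def)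
  also have "\<dots> = (\<Sum>i\<in>I. card {T\<in>S. T \<subseteq> B i})"
    using fS fI by (rule sum_card_filter_swap)
  also have "\<dots> = (\<Sum>i\<in>I. if x \<in> B i then (k - 1) choose (t - 1) else 0)"
    using subsets_of_block by simp
  also have "\<dots> = card {i\<in>I. x \<in> B i} * ((k - 1) choose (t - 1))"
    using fI by (simp add: sum.inter_filter[symmetric])
  finally show ?thesis ..
qed

lemma t_design_replication_const:
  assumes d: "t_design t v k lam X I B" and "x \<in> X" "y \<in> X"
  shows "card {i\<in>I. x \<in> B i} = card {i\<in>I. y \<in> B i}"
proof -
  have "(k - 1) choose (t - 1) \<noteq> 0"
    using d unfolding t_design_def by auto
  then show ?thesis
    using t_design_replication[OF d \<open>x \<in> X\<close>] t_design_replication[OF d \<open>y \<in> X\<close>]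
    by (metis mult_right_cancel)
qed

lemma t_design_regular:
  assumes d: "t_design t v k lam X I B" and "I \<noteq> {}"
  obtains r where "X \<noteq> {}" "0 < r" "\<forall>x\<in>X. card {i\<in>I. x \<in> B i} = r"
proof -
  from d have fI: "finite I" and blocks: "\<And>i. i \<in> I \<Longrightarrow> B i \<subseteq> X \<and> card (B i) = k"
    and "1 \<le> k"
    unfolding t_design_def by auto
  obtain i0 where i0: "i0 \<in> I"
    using \<open>I \<noteq> {}\<close> by blast
  then have "B i0 \<noteq> {}"
    using blocks \<open>1 \<le> k\<close> by force
  then obtain x0 where x0: "x0 \<in> B i0"
    by blast
  then have "x0 \<in> X"
    using blocks[OF i0] by blast
  moreover have "0 < card {i\<in>I. x0 \<in> B i}"
    using fI i0 x0 by (auto simp: card_gt_0_iff)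
  ultimately show ?thesis
    using that t_design_replication_const[OF d _ \<open>x0 \<in> X\<close>] by blast
qed

lemma card_signs_of_zero_sum:
  fixes f :: "'i \<Rightarrow> int"
  assumes "finite A" "\<forall>i\<in>A. f i = 1 \<or> f i = -1" "sum f A = 0"
  shows "2 * card {i\<in>A. f i = 1} = card A" and "2 * card {i\<in>A. f i = -1} = card A"
proof -
  let ?P = "{i\<in>A. f i = 1}" and ?M = "{i\<in>A. f i = -1}"
  have A: "A = ?P \<union> ?M" and disj: "?P \<inter> ?M = {}"
    using assms(2) by auto
  have "sum f (?P \<union> ?M) = sum f ?P + sum f ?M"
    using assms(1) by (intro sum.union_disjoint) auto
  also have "\<dots> = int (card ?P) - int (card ?M)"
    by simp
  finally have "card ?P = card ?M"
    using assms(3) A by simp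
  moreover have "card (?P \<union> ?M) = card ?P + card ?M"
    using assms(1) by (intro card_Un_disjoint) auto
  ultimately show "2 * card ?P = card A" and "2 * card ?M = card A"
    using A by simp_all
qed

lemma even_design_no_blocks: "even_design X {} B"
proof -
  have "alpha_resolution 1 X {} B {}"
    unfolding alpha_resolution_def by (simp add: partition_on_empty)
  then show ?thesis
    unfolding even_design_def by fastforce
qed

lemma regular_zero_sum_2_flow_imp_even:
  assumes "finite I" and flow: "zero_sum_2_flow X I B f"
    and "X \<noteq> {}" "0 < r" and regular: "\<forall>x\<in>X. card {i\<in>I. x \<in> B i} = r"
  shows "even_design X I B"
proof -
  define Ip where "Ip = {i\<in>I. f i = 1}"
  define Im where "Im = {i\<in>I. f i = -1}"
  from flow have signs: "\<forall>i\<in>I. f i = 1 \<or> f i = -1"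
    and zero: "\<And>x. x \<in> X \<Longrightarrow> (\<Sum>i\<in>{i\<in>I. x \<in> B i}. f i) = 0"
    unfolding zero_sum_2_flow_def by auto
  have halves: "2 * card {i\<in>Ip. x \<in> B i} = r \<and> 2 * card {i\<in>Im. x \<in> B i} = r" if x: "x \<in> X" for x
  proof -
    have "{i\<in>Ip. x \<in> B i} = {i\<in>{i\<in>I. x \<in> B i}. f i = 1}"
      "{i\<in>Im. x \<in> B i} = {i\<in>{i\<in>I. x \<in> B i}. f i = -1}"
      unfolding Ip_def Im_def by auto
    then show ?thesis
      using card_signs_of_zero_sum[of "{i\<in>I. x \<in> B i}" f] \<open>finite I\<close> signs zero[OF x]
        regular x by auto
  qed
  obtain x0 where "x0 \<in> X"
    using \<open>X \<noteq> {}\<close> by blast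
  then have "r div 2 \<ge> 1" "Ip \<noteq> {}" "Im \<noteq> {}"
    using halves[of x0] \<open>0 < r\<close> by auto
  moreover have "Ip \<inter> Im = {}" "Ip \<union> Im = I"
    using signs unfolding Ip_def Im_def by auto
  ultimately have "partition_on I {Ip, Im}" and "card {Ip, Im} = 2"
    by (auto intro!: partition_onI simp: disjnt_def card_insert_if)
  moreover have "\<forall>C\<in>{Ip, Im}. \<forall>x\<in>X. card {i\<in>C. x \<in> B i} = r div 2"
    using halves by fastforce
  ultimately show ?thesis
    unfolding even_design_def alpha_resolution_def
    using \<open>r div 2 \<ge> 1\<close> by (metis even_numeral)
qed

lemma partition_on_mem_Union_iff:
  assumes "partition_on I P" "Q \<subseteq> P" "C \<in> P" "i \<in> C"
  shows "i \<in> \<Union>Q \<longleftrightarrow> C \<in> Q"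
proof
  assume "i \<in> \<Union>Q"
  then obtain C' where "C' \<in> Q" "i \<in> C'"
    by blast
  then have "C' = C"
    using partition_onD2[OF assms(1)] assms(2-4) by (meson disjointD disjoint_iff subsetD)
  with \<open>C' \<in> Q\<close> show "C \<in> Q"
    by simp
qed (use assms(4) in blast)

lemma even_design_imp_zero_sum_2_flow:
  assumes "finite I" and "even_design X I B"
  shows "\<exists>f. zero_sum_2_flow X I B f"
proof -
  from assms(2) obtain \<alpha> P where part: "partition_on I P"
    and resolution: "\<And>C x. C \<in> P \<Longrightarrow> x \<in> X \<Longrightarrow> card {i\<in>C. x \<in> B i} = \<alpha>"
    and "even (card P)"
    unfolding even_design_def alpha_resolution_def by blast
  have "finite P"
    using finite_elements[OF \<open>finite I\<close> part] .
  obtain Q where "Q \<subseteq> P" and card_Q: "card Q = card P div 2"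
    using obtain_subset_with_card_n[of "card P div 2" P] by auto
  have card_P_Q: "card (P - Q) = card Q"
    using card_Diff_subset[OF finite_subset[OF \<open>Q \<subseteq> P\<close> \<open>finite P\<close>] \<open>Q \<subseteq> P\<close>] card_Q
      \<open>even (card P)\<close> by auto
  define f where "f i = (if i \<in> \<Union>Q then 1 else (-1::int))" for i
  have class_sum: "(\<Sum>i\<in>{i\<in>C. x \<in> B i}. f i) = (if C \<in> Q then int \<alpha> else - int \<alpha>)"
    if "C \<in> P" "x \<in> X" for C x
  proof -
    have "(\<Sum>i\<in>{i\<in>C. x \<in> B i}. f i) = (\<Sum>i\<in>{i\<in>C. x \<in> B i}. if C \<in> Q then 1 else -1)"
      using partition_on_mem_Union_iff[OF part \<open>Q \<subseteq> P\<close> \<open>C \<in> P\<close>] by (auto simp: f_def)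
    then show ?thesis
      using resolution[OF that] by simp
  qed
  have "(\<Sum>i\<in>{i\<in>I. x \<in> B i}. f i) = 0" if "x \<in> X" for x
  proof -
    have "(\<Sum>i\<in>{i\<in>I. x \<in> B i}. f i) = (\<Sum>i\<in>I. if x \<in> B i then f i else 0)"
      using \<open>finite I\<close> by (rule sum.inter_filter)
    also have "\<dots> = (\<Sum>C\<in>P. \<Sum>i\<in>C. if x \<in> B i then f i else 0)"
      using \<open>finite I\<close> part by (rule sum.partition)
    also have "\<dots> = (\<Sum>C\<in>P. if C \<in> Q then int \<alpha> else - int \<alpha>)"
    proof (rule sum.cong[OF refl])
      fix C assume "C \<in> P"
      then have "finite C"
        using partition_onD1[OF part] \<open>finite I\<close> by (metis Union_upper finite_subset)
      then show "(\<Sum>i\<in>C. if x \<in> B i then f i else 0) = (if C \<in> Q then int \<alpha> else - int \<alpha>)"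
        using class_sum[OF \<open>C \<in> P\<close> that] by (simp add: sum.inter_filter)
    qed
    also have "\<dots> = int \<alpha> * int (card Q) - int \<alpha> * int (card (P - Q))"
      using \<open>finite P\<close> \<open>Q \<subseteq> P\<close> by (simp add: sum.If_cases Int_absorb1 Diff_eq)
    finally show ?thesis
      using card_P_Q by simp
  qed
  moreover have "\<forall>i\<in>I. f i = 1 \<or> f i = -1"
    by (simp add: f_def)
  ultimately have "zero_sum_2_flow X I B f"
    unfolding zero_sum_2_flow_def by blast
  then show ?thesis
    by blast
qed

lemma t_design_zero_sum_2_flow_imp_even:
  assumes d: "t_design t v k lam X I B" and flow: "zero_sum_2_flow X I B f"
  shows "even_design X I B"
proof (cases "I = {}")
  case True
  then show ?thesis
    using even_design_no_blocks by simp
next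
  case False
  then obtain r where "X \<noteq> {}" "0 < r" "\<forall>x\<in>X. card {i\<in>I. x \<in> B i} = r"
    using t_design_regular[OF d] by blast
  moreover have "finite I"
    using d unfolding t_design_def by simp
  ultimately show ?thesis
    using regular_zero_sum_2_flow_imp_even flow by blast
qed

theorem mainTheorem11:
  fixes X :: "'a set" and I :: "'i set" and B :: "'i \<Rightarrow> 'a set"
    and t v k lam :: nat
  assumes "t_design t v k lam X I B"
  shows "(\<exists>f. zero_sum_2_flow X I B f) \<longleftrightarrow> even_design X I B"
proof -
  have "finite I"
    using assms unfolding t_design_def by simp
  then show ?thesis
    using t_design_zero_sum_2_flow_imp_even[OF assms] even_design_imp_zero_sum_2_flow by blast
qed

end
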